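(* Let $\Gamma$ be a connected imprimitive strongly regular graph. Then $E(\Gamma)=E(\bar\Gamma)$ if and only if $\Gamma\cong K_{m\times m}$ for some integer $m>1$. In this case $E(K_{m\times m})=2(m-1)m$, and hence $4\mid E(K_{m\times m})$.
   Context: A strongly regular graph with parameters $(n,k,e,d)$ is a $k$-regular simple graph on $n$ vertices, neither complete nor edgeless, in which every two adjacent vertices have exactly $e$ common neighbours and every two distinct non-adjacent vertices have exactly $d$ common neighbours. It is primitive if both it and its complement are connected, and imprimitive otherwise. $K_{a\times m}$ denotes the complete multipartite graph with $a$ parts each of size $m$. The energy $E(\Gamma)$ is the sum of the absolute values of the adjacency eigenvalues (with multiplicity); $\bar\Gamma$ is the complement. *)

theory Defs
  imports Complex_Main "Jordan_Normal_Form.Char_Poly"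
begin

text \<open>A finite simple graph on the vertex set {0..<n}, given by an adjacency
  relation adj (only its values on vertices matter).\<close>

definition simple_graph :: "nat \<Rightarrow> (nat \<Rightarrow> nat \<Rightarrow> bool) \<Rightarrow> bool" where
  "simple_graph n adj \<longleftrightarrow>
     (\<forall>i<n. \<forall>j<n. adj i j \<longleftrightarrow> adj j i) \<and> (\<forall>i<n. \<not> adj i i)"

definition complement :: "nat \<Rightarrow> (nat \<Rightarrow> nat \<Rightarrow> bool) \<Rightarrow> (nat \<Rightarrow> nat \<Rightarrow> bool)" where
  "complement n adj = (\<lambda>i j. i < n \<and> j < n \<and> i \<noteq> j \<and> \<not> adj i j)"

definition common_nbrs :: "nat \<Rightarrow> (nat \<Rightarrow> nat \<Rightarrow> bool) \<Rightarrow> nat \<Rightarrow> nat \<Rightarrow> nat" where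
  "common_nbrs n adj i j = card {w. w < n \<and> adj i w \<and> adj j w}"

definition degree :: "nat \<Rightarrow> (nat \<Rightarrow> nat \<Rightarrow> bool) \<Rightarrow> nat \<Rightarrow> nat" where
  "degree n adj i = card {w. w < n \<and> adj i w}"

definition strongly_regular ::
  "nat \<Rightarrow> (nat \<Rightarrow> nat \<Rightarrow> bool) \<Rightarrow> nat \<Rightarrow> nat \<Rightarrow> nat \<Rightarrow> bool" where
  "strongly_regular n adj k e d \<longleftrightarrow>
     simple_graph n adj \<and>
     (\<exists>i<n. \<exists>j<n. i \<noteq> j \<and> \<not> adj i j) \<and>   \<comment> \<open>not complete\<close>
     (\<exists>i<n. \<exists>j<n. adj i j) \<and>                 \<comment> \<open>not edgeless\<close>
     (\<forall>i<n. degree n adj i = k) \<and>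
     (\<forall>i<n. \<forall>j<n. adj i j \<longrightarrow> common_nbrs n adj i j = e) \<and>
     (\<forall>i<n. \<forall>j<n. i \<noteq> j \<and> \<not> adj i j \<longrightarrow> common_nbrs n adj i j = d)"

definition is_srg :: "nat \<Rightarrow> (nat \<Rightarrow> nat \<Rightarrow> bool) \<Rightarrow> bool" where
  "is_srg n adj \<longleftrightarrow> (\<exists>k e d. strongly_regular n adj k e d)"

definition connected_graph :: "nat \<Rightarrow> (nat \<Rightarrow> nat \<Rightarrow> bool) \<Rightarrow> bool" where
  "connected_graph n adj \<longleftrightarrow>
     (\<forall>i<n. \<forall>j<n. (\<lambda>x y. x < n \<and> y < n \<and> adj x y)\<^sup>*\<^sup>* i j)"

definition primitive_srg :: "nat \<Rightarrow> (nat \<Rightarrow> nat \<Rightarrow> bool) \<Rightarrow> bool" where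
  "primitive_srg n adj \<longleftrightarrow> connected_graph n adj \<and> connected_graph n (complement n adj)"

definition imprimitive_srg :: "nat \<Rightarrow> (nat \<Rightarrow> nat \<Rightarrow> bool) \<Rightarrow> bool" where
  "imprimitive_srg n adj \<longleftrightarrow> is_srg n adj \<and> \<not> primitive_srg n adj"

definition adj_matrix :: "nat \<Rightarrow> (nat \<Rightarrow> nat \<Rightarrow> bool) \<Rightarrow> real mat" where
  "adj_matrix n adj = mat n n (\<lambda>(i, j). if adj i j then 1 else 0)"

definition energy :: "nat \<Rightarrow> (nat \<Rightarrow> nat \<Rightarrow> bool) \<Rightarrow> real" where
  "energy n adj = sum_mset (image_mset cmod
      (proots (char_poly (map_mat complex_of_real (adj_matrix n adj)))))"

text \<open>Complete multipartite graph K_{a x m} on {0..<a*m}: parts are the blocks i div m.\<close>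
definition complete_multipartite :: "nat \<Rightarrow> nat \<Rightarrow> (nat \<Rightarrow> nat \<Rightarrow> bool)" where
  "complete_multipartite a m = (\<lambda>i j. i < a * m \<and> j < a * m \<and> i div m \<noteq> j div m)"

definition graph_iso ::
  "nat \<Rightarrow> (nat \<Rightarrow> nat \<Rightarrow> bool) \<Rightarrow> nat \<Rightarrow> (nat \<Rightarrow> nat \<Rightarrow> bool) \<Rightarrow> bool" where
  "graph_iso n adj n' adj' \<longleftrightarrow>
     (\<exists>f. bij_betw f {0..<n} {0..<n'} \<and>
          (\<forall>i<n. \<forall>j<n. adj i j \<longleftrightarrow> adj' (f i) (f j)))"

end

theory Submission
  imports Defs "Jordan_Normal_Form.Schur_Decomposition"
begin

text \<open>In a connected strongly regular graph whose complement is disconnected, every vertex is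
  adjacent to an endpoint of every edge: the number \<open>n + e - 2k\<close> of common non-neighbours of an
  edge does not depend on the edge, and it vanishes for an edge joining two components of the
  complement. Hence "equal or non-adjacent" is an equivalence relation with classes of some size
  \<open>s\<close>, the graph is complete multipartite and its complement is a disjoint union of copies of
  \<open>K\<^sub>s\<close>. Both graphs are regular with spectra in \<open>{n - s, 0, -s}\<close> and \<open>{s - 1, 0, -1}\<close>, and for
  a \<open>k\<close>-regular graph with eigenvalues in \<open>{p, 0, -q}\<close> the identities \<open>tr A = 0\<close> and
  \<open>tr A\<^sup>2 = nk\<close> force the energy \<open>2nk/(p + q)\<close>. So the two energies are \<open>2(n - s)\<close> and
  \<open>2n(s - 1)/s\<close>, which agree iff \<open>n = s\<^sup>2\<close>, i.e. iff the graph is \<open>K\<^bsub>s\<times>s\<^esub>\<close>.\<close>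

section \<open>Traces and eigenvalues\<close>

definition mat_trace :: "'a::comm_ring_1 mat \<Rightarrow> 'a" where
  "mat_trace A = (\<Sum>i<dim_row A. A $$ (i,i))"

lemma mat_trace_mult_comm:
  fixes A B :: "'a::comm_ring_1 mat"
  assumes "A \<in> carrier_mat n n" and "B \<in> carrier_mat n n"
  shows "mat_trace (A * B) = mat_trace (B * A)"
proof -
  have "mat_trace (A * B) = (\<Sum>i<n. \<Sum>j<n. A $$ (i,j) * B $$ (j,i))"
    using assms by (auto simp: mat_trace_def scalar_prod_def atLeast0LessThan intro!: sum.cong)
  also have "\<dots> = (\<Sum>j<n. \<Sum>i<n. B $$ (j,i) * A $$ (i,j))"
    by (subst sum.swap) (simp add: mult.commute)
  also have "\<dots> = mat_trace (B * A)"
    using assms by (auto simp: mat_trace_def scalar_prod_def atLeast0LessThan intro!: sum.cong)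
  finally show ?thesis .
qed

lemma mat_trace_similar_mat_wit:
  fixes A B :: "'a::comm_ring_1 mat"
  assumes "similar_mat_wit A B P Q"
  shows "mat_trace A = mat_trace B"
proof -
  from similar_mat_witD[OF refl assms] obtain n where
    A: "A \<in> carrier_mat n n" and B: "B \<in> carrier_mat n n" and P: "P \<in> carrier_mat n n"
    and Q: "Q \<in> carrier_mat n n" and QP: "Q * P = 1\<^sub>m n" and AB: "A = P * B * Q" by blast
  have "mat_trace A = mat_trace (P * (B * Q))" using AB P B Q by simp
  also have "\<dots> = mat_trace (B * Q * P)" using P B Q by (intro mat_trace_mult_comm) auto
  also have "\<dots> = mat_trace B" using QP B Q P by simp
  finally show ?thesis .
qed

lemma upper_triangular_mult_diag:
  fixes A B :: "'a::comm_ring_1 mat"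
  assumes A: "A \<in> carrier_mat n n" and B: "B \<in> carrier_mat n n"
    and "upper_triangular A" and "upper_triangular B" and i: "i < n"
  shows "(A * B) $$ (i,i) = A $$ (i,i) * B $$ (i,i)"
proof -
  have "(A * B) $$ (i,i) = (\<Sum>k<n. A $$ (i,k) * B $$ (k,i))"
    using A B i by (simp add: scalar_prod_def atLeast0LessThan)
  also have "\<dots> = (\<Sum>k<n. if k = i then A $$ (i,i) * B $$ (i,i) else 0)"
    using assms by (intro sum.cong refl) (auto simp: upper_triangular_def elim: linorder_neqE_nat)
  finally show ?thesis using i by simp
qed

lemma proots_prod_linear_factors: "proots (\<Prod>a\<leftarrow>as. [:- a, 1:]) = mset (as :: 'a::idom list)"
proof (induction as)
  case (Cons b bs)
  have "(\<Prod>a\<leftarrow>bs. [:- a, 1:]) \<noteq> 0" by auto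
  then have "proots ([:- b, 1:] * (\<Prod>a\<leftarrow>bs. [:- a, 1:]))
      = proots [:- b, 1:] + proots (\<Prod>a\<leftarrow>bs. [:- a, 1:])"
    by (intro proots_mult) auto
  then show ?case using Cons by (simp del: pCons_eq_0_iff mult_pCons_left)
qed simp

lemma similar_upper_triangular_proots:
  fixes A :: "complex mat"
  assumes A: "A \<in> carrier_mat n n"
  obtains B P Q where "similar_mat_wit A B P Q" and "upper_triangular B" and "B \<in> carrier_mat n n"
    and "proots (char_poly A) = mset (diag_mat B)"
proof -
  obtain as where cp: "char_poly A = (\<Prod>a\<leftarrow>as. [:- a, 1:])"
    using char_poly_factorized[OF A] by auto
  obtain B P Q where sd: "schur_decomposition A as = (B,P,Q)"
    by (cases "schur_decomposition A as") auto
  from schur_decomposition[OF A cp sd] similar_mat_witD2[OF A] cp proots_prod_linear_factors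
  show ?thesis by (intro that) auto
qed

lemma sum_mset_diag_mat:
  assumes "B \<in> carrier_mat n n"
  shows "(\<Sum>x\<in>#mset (diag_mat B). f x) = (\<Sum>i<n. f (B $$ (i,i)))"
  using assms
  by (simp add: diag_mat_def atLeast0LessThan sum_unfold_sum_mset image_mset.compositionality o_def)

lemma sum_proots_char_poly:
  fixes A :: "complex mat"
  assumes A: "A \<in> carrier_mat n n"
  shows "(\<Sum>x\<in>#proots (char_poly A). x) = mat_trace A"
proof -
  obtain B P Q where sim: "similar_mat_wit A B P Q" and B: "B \<in> carrier_mat n n"
    and pr: "proots (char_poly A) = mset (diag_mat B)"
    using similar_upper_triangular_proots[OF A] .
  show ?thesis
    using sum_mset_diag_mat[OF B, of "\<lambda>x. x"] mat_trace_similar_mat_wit[OF sim] B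
    by (simp add: pr mat_trace_def)
qed

lemma sum_sq_proots_char_poly:
  fixes A :: "complex mat"
  assumes A: "A \<in> carrier_mat n n"
  shows "(\<Sum>x\<in>#proots (char_poly A). x\<^sup>2) = mat_trace (A * A)"
proof -
  obtain B P Q where sim: "similar_mat_wit A B P Q" and ut: "upper_triangular B"
    and B: "B \<in> carrier_mat n n" and pr: "proots (char_poly A) = mset (diag_mat B)"
    using similar_upper_triangular_proots[OF A] .
  have sim2: "similar_mat_wit (A * A) (B * B) P Q"
    using similar_mat_wit_pow[OF sim, of 2] A B by (simp add: numeral_2_eq_2)
  have "(\<Sum>x\<in>#proots (char_poly A). x\<^sup>2) = (\<Sum>i<n. (B * B) $$ (i,i))"
    using upper_triangular_mult_diag[OF B B ut ut]
    by (simp add: pr sum_mset_diag_mat[OF B] power2_eq_square)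
  also have "\<dots> = mat_trace (A * A)"
    using mat_trace_similar_mat_wit[OF sim2] B by (simp add: mat_trace_def)
  finally show ?thesis .
qed

lemma eigenvalue_if_in_proots_char_poly:
  fixes A :: "complex mat"
  assumes A: "A \<in> carrier_mat n n" and "x \<in># proots (char_poly A)"
  shows "eigenvalue A x"
proof -
  have "char_poly A \<noteq> 0" using degree_monic_char_poly[OF A] by auto
  then show ?thesis using assms eigenvalue_root_char_poly[OF A] by simp
qed

lemma sum_mset_two_point_support:
  fixes f :: "'a::zero \<Rightarrow> 'b::semiring_1"
  assumes "set_mset M \<subseteq> {a, b, 0}" and "a \<noteq> b" and "f 0 = 0"
  shows "(\<Sum>x\<in>#M. f x) = of_nat (count M a) * f a + of_nat (count M b) * f b"
  using assms(1)
proof (induction M)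
  case (add x M)
  then show ?case using assms(2,3) by (auto simp: algebra_simps)
qed simp

section \<open>Energy of a regular graph with three eigenvalues\<close>

abbreviation adj_cmat :: "nat \<Rightarrow> (nat \<Rightarrow> nat \<Rightarrow> bool) \<Rightarrow> complex mat" where
  "adj_cmat n G \<equiv> map_mat complex_of_real (adj_matrix n G)"

lemma dim_adj_matrix [simp]: "dim_row (adj_matrix n G) = n" "dim_col (adj_matrix n G) = n"
  by (simp_all add: adj_matrix_def)

lemma adj_matrix_index [simp]:
  "i < n \<Longrightarrow> j < n \<Longrightarrow> adj_matrix n G $$ (i,j) = (if G i j then 1 else 0)"
  by (simp add: adj_matrix_def)

lemma adj_cmat_carrier [simp]: "adj_cmat n G \<in> carrier_mat n n"
  by (simp add: carrier_matI)

lemma sum_filter_lessThan: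
  fixes n :: nat
  shows "(\<Sum>j | j < n \<and> P j. f j) = (\<Sum>j<n. if P j then f j else 0)"
proof -
  have "{j. j < n \<and> P j} = {j \<in> {..<n}. P j}" by auto
  then show ?thesis using sum.inter_filter[OF finite_lessThan[of n], of f P] by simp
qed

lemma adj_cmat_row_sum:
  assumes "i < n"
  shows "(\<Sum>j<n. adj_cmat n G $$ (i,j) * u j) = (\<Sum>j | j < n \<and> G i j. u j)"
proof -
  have "(\<Sum>j<n. adj_cmat n G $$ (i,j) * u j) = (\<Sum>j<n. if G i j then u j else 0)"
    using assms by (intro sum.cong) auto
  then show ?thesis by (simp add: sum_filter_lessThan)
qed

lemma mat_trace_adj_cmat:
  assumes "simple_graph n G"
  shows "mat_trace (adj_cmat n G) = 0"
  using assms by (simp add: mat_trace_def simple_graph_def)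

lemma mat_trace_adj_cmat_sq:
  assumes G: "simple_graph n G"
  shows "mat_trace (adj_cmat n G * adj_cmat n G) = of_nat (\<Sum>i<n. degree n G i)"
proof -
  have "(adj_cmat n G * adj_cmat n G) $$ (i,i) = of_nat (degree n G i)" if i: "i < n" for i
  proof -
    have "(adj_cmat n G * adj_cmat n G) $$ (i,i) = (\<Sum>j<n. adj_cmat n G $$ (i,j) * adj_cmat n G $$ (j,i))"
      using i by (simp add: scalar_prod_def atLeast0LessThan)
    also have "\<dots> = (\<Sum>j | j < n \<and> G i j. adj_cmat n G $$ (j,i))"
      using i by (rule adj_cmat_row_sum)
    also have "\<dots> = (\<Sum>j | j < n \<and> G i j. 1)"
      using G i by (intro sum.cong) (auto simp: simple_graph_def)
    finally show ?thesis by (simp add: degree_def)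
  qed
  then show ?thesis by (simp add: mat_trace_def)
qed

lemma adj_cmat_eigenvalueE:
  assumes "eigenvalue (adj_cmat n G) x"
  obtains u where "\<exists>i<n. u i \<noteq> 0"
    and "\<And>i. i < n \<Longrightarrow> x * u i = (\<Sum>j | j < n \<and> G i j. u j)"
proof -
  from assms obtain v where v: "v \<in> carrier_vec n" "v \<noteq> 0\<^sub>v n" "adj_cmat n G *\<^sub>v v = x \<cdot>\<^sub>v v"
    unfolding eigenvalue_def eigenvector_def by auto
  have "\<exists>i<n. v $ i \<noteq> 0"
  proof (rule ccontr)
    assume "\<not> (\<exists>i<n. v $ i \<noteq> 0)"
    then have "v = 0\<^sub>v n" using v(1) by (intro eq_vecI) auto
    then show False using v(2) by simp
  qed
  moreover have "x * v $ i = (\<Sum>j | j < n \<and> G i j. v $ j)" if i: "i < n" for i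
  proof -
    have "x * v $ i = (adj_cmat n G *\<^sub>v v) $ i" using v i by simp
    also have "\<dots> = (\<Sum>j<n. adj_cmat n G $$ (i,j) * v $ j)"
      using v(1) i by (simp add: scalar_prod_def atLeast0LessThan del: adj_matrix_index)
    also have "\<dots> = (\<Sum>j | j < n \<and> G i j. v $ j)"
      using i by (rule adj_cmat_row_sum)
    finally show ?thesis .
  qed
  ultimately show ?thesis using that by blast
qed

theorem energy_regular_three_eigenvalues:
  fixes p q :: real
  assumes G: "simple_graph n G" and deg: "\<And>i. i < n \<Longrightarrow> degree n G i = k"
    and ev: "\<And>x. eigenvalue (adj_cmat n G) x \<Longrightarrow> x \<in> {of_real p, 0, - of_real q}"
    and p: "p > 0" and q: "q > 0"
  shows "energy n G = 2 * real n * real k / (p + q)"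
proof -
  define Sp where "Sp = proots (char_poly (adj_cmat n G))"
  define \<alpha> where "\<alpha> = real (count Sp (of_real p))"
  define \<gamma> where "\<gamma> = real (count Sp (- of_real q))"
  have supp: "set_mset Sp \<subseteq> {of_real p, - of_real q, 0}"
    using eigenvalue_if_in_proots_char_poly[OF adj_cmat_carrier] ev unfolding Sp_def by blast
  have pq: "(of_real p :: complex) \<noteq> - of_real q"
    using p q by (metis add_pos_pos eq_neg_iff_add_eq_0 of_real_add of_real_eq_0_iff order_less_irrefl)
  note sum_Sp = sum_mset_two_point_support[OF supp pq]
  have "of_real (\<alpha> * p - \<gamma> * q) = (\<Sum>x\<in>#Sp. x)"
    using sum_Sp[of "\<lambda>x. x"] by (simp add: \<alpha>_def \<gamma>_def)
  also have "\<dots> = 0"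
    using sum_proots_char_poly[OF adj_cmat_carrier] mat_trace_adj_cmat[OF G] by (simp add: Sp_def)
  finally have trace1: "\<alpha> * p = \<gamma> * q" by (simp del: of_real_diff)
  have "of_real (\<alpha> * p\<^sup>2 + \<gamma> * q\<^sup>2) = (\<Sum>x\<in>#Sp. x\<^sup>2)"
    using sum_Sp[of "\<lambda>x. x\<^sup>2"] by (simp add: \<alpha>_def \<gamma>_def)
  also have "\<dots> = of_real (real n * real k)"
    using sum_sq_proots_char_poly[OF adj_cmat_carrier] mat_trace_adj_cmat_sq[OF G] deg
    by (simp add: Sp_def)
  finally have trace2: "\<alpha> * p\<^sup>2 + \<gamma> * q\<^sup>2 = real n * real k"
    by (simp only: of_real_eq_iff)
  have "energy n G = \<alpha> * p + \<gamma> * q"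
    using sum_Sp[of cmod] p q by (simp add: energy_def Sp_def \<alpha>_def \<gamma>_def)
  moreover have "real n * real k = \<gamma> * q * (p + q)"
  proof -
    have "\<alpha> * p\<^sup>2 = \<gamma> * q * p" by (metis trace1 mult.assoc power2_eq_square)
    then have "real n * real k = \<gamma> * q * p + \<gamma> * q\<^sup>2" by (simp only: trace2[symmetric])
    then show ?thesis by (simp add: power2_eq_square algebra_simps)
  qed
  ultimately show ?thesis using trace1 p q by (simp add: field_simps)
qed

section \<open>Complete multipartite graphs and disjoint unions of cliques\<close>

locale equipartition =
  fixes n s :: nat and R :: "nat \<Rightarrow> nat \<Rightarrow> bool"
  assumes R_refl: "i < n \<Longrightarrow> R i i"
    and R_sym: "i < n \<Longrightarrow> j < n \<Longrightarrow> R i j \<Longrightarrow> R j i"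
    and R_trans: "i < n \<Longrightarrow> j < n \<Longrightarrow> l < n \<Longrightarrow> R i j \<Longrightarrow> R j l \<Longrightarrow> R i l"
    and card_class: "i < n \<Longrightarrow> card {j. j < n \<and> R i j} = s"
begin

definition class_sum :: "(nat \<Rightarrow> complex) \<Rightarrow> nat \<Rightarrow> complex" where
  "class_sum u i = (\<Sum>j | j < n \<and> R i j. u j)"

lemma class_sum_eq: "i < n \<Longrightarrow> j < n \<Longrightarrow> R i j \<Longrightarrow> class_sum u j = class_sum u i"
  unfolding class_sum_def by (rule sum.cong) (auto intro: R_trans R_sym)

lemma sum_class_const:
  fixes T :: "nat \<Rightarrow> 'a::semiring_1"
  assumes "i < n" and "\<And>j. j < n \<Longrightarrow> R i j \<Longrightarrow> T j = T i"
  shows "(\<Sum>j | j < n \<and> R i j. T j) = of_nat s * T i"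
proof -
  have "(\<Sum>j | j < n \<and> R i j. T j) = (\<Sum>j | j < n \<and> R i j. T i)"
    using assms(2) by (intro sum.cong) auto
  then show ?thesis using card_class[OF assms(1)] by simp
qed

lemma card_class_le: "i < n \<Longrightarrow> s \<le> n"
  using card_class card_mono[of "{..<n}" "{j. j < n \<and> R i j}"] by fastforce

lemma sum_class_sums: "(\<Sum>i<n. class_sum u i) = of_nat s * (\<Sum>j<n. u j)"
proof -
  have "(\<Sum>i<n. class_sum u i) = (\<Sum>i<n. \<Sum>j<n. if R i j then u j else 0)"
    by (simp add: class_sum_def sum_filter_lessThan)
  also have "\<dots> = (\<Sum>j<n. \<Sum>i<n. if R j i then u j else 0)"
    by (subst sum.swap) (auto intro!: sum.cong dest: R_sym)
  also have "\<dots> = (\<Sum>j<n. of_nat s * u j)"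
    by (intro sum.cong refl) (simp add: sum_filter_lessThan[symmetric] card_class)
  finally show ?thesis by (simp add: sum_distrib_left)
qed

lemma class_indexE:
  assumes n: "n = a * s" and s: "0 < s"
  obtains c where "\<And>i. i < n \<Longrightarrow> c i < a"
    and "\<And>i j. i < n \<Longrightarrow> j < n \<Longrightarrow> c i = c j \<longleftrightarrow> R i j"
proof -
  define cl where "cl i = {j. j < n \<and> R i j}" for i
  define Q where "Q = cl ` {..<n}"
  have cl_eq: "cl i = cl j \<longleftrightarrow> R i j" if "i < n" "j < n" for i j
    using that R_refl R_sym R_trans unfolding cl_def by blast
  have fin_Q: "finite Q" by (simp add: Q_def)
  have "s * card Q = card (\<Union>Q)"
  proof (rule card_partition[OF fin_Q])
    show "finite (\<Union>Q)" by (auto simp: Q_def cl_def)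
    show "card c = s" if "c \<in> Q" for c using that card_class by (auto simp: Q_def cl_def)
    show "c1 \<inter> c2 = {}" if c: "c1 \<in> Q" "c2 \<in> Q" "c1 \<noteq> c2" for c1 c2
    proof -
      obtain i j where ij: "i < n" "j < n" "c1 = cl i" "c2 = cl j" using c(1,2) by (auto simp: Q_def)
      have "R i j" if "w < n" "R i w" "R j w" for w
        using that ij R_sym R_trans by blast
      then show ?thesis using ij c(3) cl_eq by (auto simp: cl_def)
    qed
  qed
  moreover have "\<Union>Q = {..<n}" using R_refl by (auto simp: Q_def cl_def)
  ultimately have card_Q: "card Q = a" using n s by simp
  obtain h where h: "bij_betw h Q {0..<a}"
    using ex_bij_betw_finite_nat[OF fin_Q] card_Q by auto
  show ?thesis
  proof
    show "h (cl i) < a" if "i < n" for i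
      using that bij_betwE[OF h] by (auto simp: Q_def)
    show "h (cl i) = h (cl j) \<longleftrightarrow> R i j" if "i < n" "j < n" for i j
      using that cl_eq inj_on_eq_iff[OF bij_betw_imp_inj_on[OF h]] by (auto simp: Q_def)
  qed
qed

definition class_rank :: "nat \<Rightarrow> nat" where
  "class_rank i = card {j. j < i \<and> R i j}"

lemma class_rank_less:
  assumes i: "i < n"
  shows "class_rank i < s"
proof -
  have "{j. j < i \<and> R i j} \<subset> {j. j < n \<and> R i j}" using i R_refl[OF i] by auto
  then show ?thesis unfolding class_rank_def card_class[OF i, symmetric] by (simp add: psubset_card_mono)
qed

lemma class_rank_strict_mono:
  assumes ij: "i < j" and j: "j < n" and "R i j"
  shows "class_rank i < class_rank j"
proof -
  have i: "i < n" and ji: "R j i" using assms R_sym by auto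
  have "{k. k < i \<and> R i k} \<subseteq> {k. k < j \<and> R j k}"
    using ij i ji R_trans[OF j i] by auto
  moreover have "i \<in> {k. k < j \<and> R j k} - {k. k < i \<and> R i k}" using ij ji by simp
  ultimately have "{k. k < i \<and> R i k} \<subset> {k. k < j \<and> R j k}" by blast
  then show ?thesis unfolding class_rank_def by (simp add: psubset_card_mono)
qed

lemma class_rank_inj:
  assumes i: "i < n" and j: "j < n" and R: "R i j" and eq: "class_rank i = class_rank j"
  shows "i = j"
proof (rule linorder_cases[of i j])
  assume "i < j"
  from class_rank_strict_mono[OF this j R] show ?thesis using eq by simp
next
  assume "j < i"
  from class_rank_strict_mono[OF this i R_sym[OF i j R]] show ?thesis using eq by simp
qed

context
  fixes G :: "nat \<Rightarrow> nat \<Rightarrow> bool"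
  assumes G: "\<And>i j. i < n \<Longrightarrow> j < n \<Longrightarrow> G i j \<longleftrightarrow> \<not> R i j"
begin

lemma multipartite_simple: "simple_graph n G"
  using G R_refl R_sym unfolding simple_graph_def by blast

lemma multipartite_degree:
  assumes i: "i < n"
  shows "degree n G i = n - s"
proof -
  have "{j. j < n \<and> G i j} = {..<n} - {j. j < n \<and> R i j}" using G i by auto
  then show ?thesis using card_class[OF i] by (simp add: degree_def) (subst card_Diff_subset; auto)
qed

lemma multipartite_eigen_class:
  assumes eig: "\<And>i. i < n \<Longrightarrow> x * u i = (\<Sum>j | j < n \<and> G i j. u j)" and i: "i < n"
  shows "x * u i = (\<Sum>j<n. u j) - class_sum u i"
proof -
  have "{j. j < n \<and> G i j} = {..<n} - {j. j < n \<and> R i j}" using G i by auto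
  then have "x * u i = sum u ({..<n} - {j. j < n \<and> R i j})" using eig[OF i] by simp
  also have "\<dots> = (\<Sum>j<n. u j) - class_sum u i"
    unfolding class_sum_def by (subst sum_diff) auto
  finally show ?thesis .
qed

lemma multipartite_eigen_class_sum:
  assumes eig: "\<And>i. i < n \<Longrightarrow> x * u i = (\<Sum>j | j < n \<and> G i j. u j)" and i: "i < n"
  shows "x * class_sum u i = of_nat s * (\<Sum>j<n. u j) - of_nat s * class_sum u i"
proof -
  have "x * class_sum u i = (\<Sum>j | j < n \<and> R i j. x * u j)"
    by (simp add: class_sum_def sum_distrib_left)
  also have "\<dots> = (\<Sum>j | j < n \<and> R i j. (\<Sum>j<n. u j) - class_sum u j)"
    using multipartite_eigen_class[OF eig] by (intro sum.cong) auto
  also have "\<dots> = of_nat s * (\<Sum>j<n. u j) - of_nat s * class_sum u i"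
    using i by (simp add: sum_class_const class_sum_eq card_class right_diff_distrib)
  finally show ?thesis .
qed

lemma multipartite_eigenvalue:
  assumes ev: "eigenvalue (adj_cmat n G) x"
  shows "x \<in> {of_real (real (n - s)), 0, - of_real (real s)}"
proof -
  obtain u where nz: "\<exists>i<n. u i \<noteq> 0"
    and eig: "\<And>i. i < n \<Longrightarrow> x * u i = (\<Sum>j | j < n \<and> G i j. u j)"
    using adj_cmat_eigenvalueE[OF ev] by blast
  define S where "S = (\<Sum>j<n. u j)"
  note eig_class = multipartite_eigen_class[OF eig, folded S_def]
  have "x * S = (\<Sum>i<n. S - class_sum u i)"
    using eig_class by (simp add: S_def sum_distrib_left)
  also have "\<dots> = of_nat n * S - of_nat s * S"
    by (simp add: sum_subtractf sum_class_sums S_def)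
  finally have total_eq: "x * S = of_nat n * S - of_nat s * S" .
  show ?thesis
  proof (cases "x = of_nat (n - s)")
    case False
    have "s \<le> n" using nz card_class_le by blast
    then have "(x - of_nat (n - s)) * S = 0" using total_eq by (simp add: algebra_simps)
    then have S0: "S = 0" using False by simp
    show ?thesis
    proof (cases "x = - of_nat s")
      case False
      then have "x + of_nat s \<noteq> 0" by (metis neg_eq_iff_add_eq_0 add.commute)
      moreover have "(x + of_nat s) * class_sum u i = 0" if "i < n" for i
        using multipartite_eigen_class_sum[OF eig that, folded S_def] S0 by (simp add: algebra_simps)
      ultimately have class0: "class_sum u i = 0" if "i < n" for i
        using that by simp
      obtain i where "i < n" "u i \<noteq> 0" using nz by blast
      then show ?thesis using eig_class[of i] S0 class0[of i] by simp
    qed simp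
  qed simp
qed

lemma multipartite_energy:
  assumes "0 < s" and "s < n"
  shows "energy n G = 2 * real (n - s)"
proof -
  have "energy n G = 2 * real n * real (n - s) / (real (n - s) + real s)"
    using multipartite_simple multipartite_degree multipartite_eigenvalue assms
    by (intro energy_regular_three_eigenvalues) auto
  then show ?thesis using assms by simp
qed

lemma multipartite_iso:
  assumes n: "n = a * s" and s: "0 < s"
  shows "graph_iso n G (a * s) (complete_multipartite a s)"
proof -
  obtain c where c_less: "\<And>i. i < n \<Longrightarrow> c i < a"
    and c_eq: "\<And>i j. i < n \<Longrightarrow> j < n \<Longrightarrow> c i = c j \<longleftrightarrow> R i j"
    using class_indexE[OF n s] by blast
  define f where "f i = c i * s + class_rank i" for i
  have f_div: "f i div s = c i" and f_mod: "f i mod s = class_rank i" if "i < n" for i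
    using class_rank_less[OF that] s by (simp_all add: f_def)
  have f_less: "f i < a * s" if i: "i < n" for i
  proof -
    have "f i < Suc (c i) * s" using class_rank_less[OF i] by (simp add: f_def)
    also have "\<dots> \<le> a * s" using c_less[OF i] by (intro mult_le_mono1) simp
    finally show ?thesis .
  qed
  have "inj_on f {0..<n}"
  proof (rule inj_onI)
    fix i j assume "i \<in> {0..<n}" "j \<in> {0..<n}" and fij: "f i = f j"
    then have i: "i < n" and j: "j < n" by auto
    have "R i j" using c_eq[OF i j] f_div[OF i] f_div[OF j] fij by simp
    moreover have "class_rank i = class_rank j" using f_mod[OF i] f_mod[OF j] fij by simp
    ultimately show "i = j" using class_rank_inj i j by blast
  qed
  moreover have "f ` {0..<n} = {0..<a * s}"
    using f_less card_image[OF \<open>inj_on f {0..<n}\<close>] n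
    by (intro card_subset_eq) auto
  ultimately have "bij_betw f {0..<n} {0..<a * s}" by (simp add: bij_betw_def)
  moreover have "G i j \<longleftrightarrow> complete_multipartite a s (f i) (f j)" if "i < n" "j < n" for i j
    using that G f_less f_div c_eq by (simp add: complete_multipartite_def)
  ultimately show ?thesis unfolding graph_iso_def by blast
qed

end

context
  fixes H :: "nat \<Rightarrow> nat \<Rightarrow> bool"
  assumes H: "\<And>i j. i < n \<Longrightarrow> j < n \<Longrightarrow> H i j \<longleftrightarrow> i \<noteq> j \<and> R i j"
begin

lemma cliques_simple: "simple_graph n H"
  using H R_sym unfolding simple_graph_def by blast

lemma cliques_nbrs: "i < n \<Longrightarrow> {j. j < n \<and> H i j} = {j. j < n \<and> R i j} - {i}"
  using H by auto

lemma cliques_degree: "i < n \<Longrightarrow> degree n H i = s - 1"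
  using card_class R_refl by (simp add: degree_def cliques_nbrs)

lemma cliques_eigenvalue:
  assumes ev: "eigenvalue (adj_cmat n H) x"
  shows "x \<in> {of_real (real s - 1), 0, - of_real 1}"
proof -
  obtain u where nz: "\<exists>i<n. u i \<noteq> 0"
    and eig: "\<And>i. i < n \<Longrightarrow> x * u i = (\<Sum>j | j < n \<and> H i j. u j)"
    using adj_cmat_eigenvalueE[OF ev] by blast
  have eig_class: "x * u i = class_sum u i - u i" if i: "i < n" for i
    using eig[OF i] R_refl[OF i] i by (simp add: cliques_nbrs class_sum_def sum_diff1)
  have class_eq: "x * class_sum u i = of_nat s * class_sum u i - class_sum u i" if i: "i < n" for i
  proof -
    have "x * class_sum u i = (\<Sum>j | j < n \<and> R i j. x * u j)"
      by (simp add: class_sum_def sum_distrib_left)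
    also have "\<dots> = (\<Sum>j | j < n \<and> R i j. class_sum u j - u j)"
      using eig_class by (intro sum.cong) auto
    also have "\<dots> = (\<Sum>j | j < n \<and> R i j. class_sum u j) - class_sum u i"
      by (simp only: sum_subtractf class_sum_def[of u i])
    also have "\<dots> = of_nat s * class_sum u i - class_sum u i"
      using i by (simp add: sum_class_const class_sum_eq card_class)
    finally show ?thesis .
  qed
  show ?thesis
  proof (cases "x = of_real (real s - 1)")
    case False
    then have "x - (of_nat s - 1) \<noteq> 0" by simp
    moreover have "(x - (of_nat s - 1)) * class_sum u i = 0" if "i < n" for i
      using class_eq[OF that] by (simp add: algebra_simps)
    ultimately have class0: "class_sum u i = 0" if "i < n" for i
      using that by simp
    obtain i where i: "i < n" "u i \<noteq> 0" using nz by blast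
    then have "(x + 1) * u i = 0" using eig_class[of i] class0[of i] by (simp add: algebra_simps)
    then have "x = - 1" using i(2) by (simp add: add_eq_0_iff2)
    then show ?thesis by simp
  qed simp
qed

lemma cliques_energy:
  assumes "2 \<le> s"
  shows "energy n H = 2 * real n * (real s - 1) / real s"
proof -
  have "energy n H = 2 * real n * real (s - 1) / ((real s - 1) + 1)"
    using cliques_simple cliques_degree cliques_eigenvalue assms
    by (intro energy_regular_three_eigenvalues) auto
  then show ?thesis using assms by simp
qed

end

lemma multipartite_cliques_energy_eq_iff:
  assumes G: "\<And>i j. i < n \<Longrightarrow> j < n \<Longrightarrow> G i j \<longleftrightarrow> \<not> R i j"
    and H: "\<And>i j. i < n \<Longrightarrow> j < n \<Longrightarrow> H i j \<longleftrightarrow> i \<noteq> j \<and> R i j"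
    and s: "2 \<le> s" "s < n"
  shows "energy n G = energy n H \<longleftrightarrow> n = s * s"
proof -
  have "energy n G = energy n H \<longleftrightarrow> 2 * real (n - s) = 2 * real n * (real s - 1) / real s"
    using multipartite_energy[OF G] cliques_energy[OF H] s by simp
  also have "\<dots> \<longleftrightarrow> n = s * s"
    using s by (simp add: field_simps) (metis of_nat_eq_iff of_nat_mult)
  finally show ?thesis .
qed

end

lemma div_eq_iff_interval:
  fixes j m q :: nat
  assumes "0 < m"
  shows "j div m = q \<longleftrightarrow> q * m \<le> j \<and> j < q * m + m"
proof
  assume q: "j div m = q"
  show "q * m \<le> j \<and> j < q * m + m"
    using div_times_less_eq_dividend[of j m] div_mult_mod_eq[of j m] mod_less_divisor[OF assms, of j]
    unfolding q by linarith
next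
  assume "q * m \<le> j \<and> j < q * m + m"
  then show "j div m = q" by (intro div_nat_eqI) (auto simp: mult.commute)
qed

lemma card_same_block:
  fixes a m i :: nat
  assumes m: "0 < m" and i: "i < a * m"
  shows "card {j. j < a * m \<and> i div m = j div m} = m"
proof -
  define q where "q = i div m"
  have "Suc q * m \<le> a * m"
    using less_mult_imp_div_less[OF i] by (intro mult_le_mono1) (simp add: q_def)
  then have "q * m + m \<le> a * m" by simp
  moreover have "q = j div m \<longleftrightarrow> q * m \<le> j \<and> j < q * m + m" for j
    using div_eq_iff_interval[OF m, of j q] by auto
  ultimately have "j < a * m \<and> q = j div m \<longleftrightarrow> j \<in> {q * m..<q * m + m}" for j
    by (simp only: atLeastLessThan_iff) linarith
  then have "{j. j < a * m \<and> q = j div m} = {q * m..<q * m + m}"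
    by blast
  then show ?thesis by (simp add: q_def)
qed
lemma equipartition_blocks:
  assumes "0 < m"
  shows "equipartition (a * m) m (\<lambda>i j. i div m = j div m)"
  by unfold_locales (simp_all add: card_same_block[OF assms])

lemma complete_multipartite_blocks:
  "i < a * m \<Longrightarrow> j < a * m \<Longrightarrow> complete_multipartite a m i j \<longleftrightarrow> \<not> i div m = j div m"
  by (simp add: complete_multipartite_def)

lemma degree_complete_multipartite:
  assumes "0 < m" and "i < a * m"
  shows "degree (a * m) (complete_multipartite a m) i = a * m - m"
proof -
  interpret equipartition "a * m" m "\<lambda>i j. i div m = j div m"
    using assms(1) by (rule equipartition_blocks)
  show ?thesis using multipartite_degree[OF complete_multipartite_blocks assms(2)] .
qed

lemma energy_complete_multipartite:
  assumes "1 < a" and "0 < m"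
  shows "energy (a * m) (complete_multipartite a m) = 2 * (real a - 1) * real m"
proof -
  interpret equipartition "a * m" m "\<lambda>i j. i div m = j div m"
    using assms(2) by (rule equipartition_blocks)
  have "m < a * m" using assms by simp
  then have "energy (a * m) (complete_multipartite a m) = 2 * real (a * m - m)"
    using multipartite_energy[OF complete_multipartite_blocks[where a = a and m = m] assms(2)] by blast
  also have "\<dots> = 2 * (real a - 1) * real m"
    using \<open>m < a * m\<close> by (simp add: algebra_simps)
  finally show ?thesis .
qed

lemma graph_iso_degree:
  assumes iso: "graph_iso n G n' G'" and deg: "\<And>i'. i' < n' \<Longrightarrow> degree n' G' i' = k"
    and i: "i < n"
  shows "degree n G i = k"
proof -
  obtain f where f: "bij_betw f {0..<n} {0..<n'}"
    and hom: "\<And>i j. i < n \<Longrightarrow> j < n \<Longrightarrow> G i j \<longleftrightarrow> G' (f i) (f j)"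
    using iso unfolding graph_iso_def by blast
  have image: "f ` {w. w < n \<and> G i w} = {w'. w' < n' \<and> G' (f i) w'}"
  proof (intro Set.set_eqI iffI)
    fix w' assume "w' \<in> f ` {w. w < n \<and> G i w}"
    then show "w' \<in> {w'. w' < n' \<and> G' (f i) w'}" using f hom i by (auto dest: bij_betwE)
  next
    fix w' assume w': "w' \<in> {w'. w' < n' \<and> G' (f i) w'}"
    then obtain w where "w < n" "w' = f w" using bij_betw_imp_surj_on[OF f] by fastforce
    then show "w' \<in> f ` {w. w < n \<and> G i w}" using w' hom i by auto
  qed
  have "inj_on f {w. w < n \<and> G i w}"
    using bij_betw_imp_inj_on[OF f] by (rule inj_on_subset) auto
  then have "degree n G i = degree n' G' (f i)"
    by (simp add: degree_def card_image flip: image)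
  also have "\<dots> = k" using deg bij_betwE[OF f] i by simp
  finally show ?thesis .
qed

lemma (in equipartition) multipartite_square_iso_iff:
  assumes G: "\<And>i j. i < n \<Longrightarrow> j < n \<Longrightarrow> G i j \<longleftrightarrow> \<not> R i j" and s: "1 < s"
  shows "(\<exists>m::nat. m > 1 \<and> graph_iso n G (m * m) (complete_multipartite m m)) \<longleftrightarrow> n = s * s"
proof
  assume "\<exists>m::nat. m > 1 \<and> graph_iso n G (m * m) (complete_multipartite m m)"
  then obtain m where m: "1 < m" and iso: "graph_iso n G (m * m) (complete_multipartite m m)"
    by blast
  then have n: "n = m * m" by (auto simp: graph_iso_def dest: bij_betw_same_card)
  have "0 < n" using n m by simp
  then have "n - s = m * m - m"
    using graph_iso_degree[OF iso degree_complete_multipartite, of 0] multipartite_degree[OF G, of 0] m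
    by simp
  moreover have "s \<le> n" and "m \<le> m * m" using card_class_le[of 0] n m by simp_all
  ultimately have "s = m" using n by linarith
  then show "n = s * s" using n by simp
next
  assume "n = s * s"
  then have "graph_iso n G (s * s) (complete_multipartite s s)"
    using multipartite_iso[OF G] s by simp
  then show "\<exists>m::nat. m > 1 \<and> graph_iso n G (m * m) (complete_multipartite m m)"
    using s by blast
qed

lemma energy_complete_multipartite_square_mult_four:
  assumes m: "1 < m"
  shows "\<exists>q::nat. energy (m * m) (complete_multipartite m m) = 4 * real q"
proof -
  have "even ((m - 1) * m)" by simp
  then obtain q where "(m - 1) * m = 2 * q" by blast
  then have "(real m - 1) * real m = 2 * real q"
    using m by (metis of_nat_1 of_nat_diff of_nat_mult of_nat_numeral less_imp_le)
  moreover have "energy (m * m) (complete_multipartite m m) = 2 * (real m - 1) * real m"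
    using m by (simp add: energy_complete_multipartite)
  ultimately have "energy (m * m) (complete_multipartite m m) = 4 * real q"
    by (simp only: mult.assoc)
  then show ?thesis ..
qed

section \<open>Imprimitive strongly regular graphs\<close>

lemma srg_non_nbrs_card:
  assumes srg: "strongly_regular n adj k e d" and x: "x < n" and y: "y < n" and xy: "adj x y"
  shows "card {w. w < n \<and> \<not> adj x w \<and> \<not> adj y w} + 2 * k = n + e"
proof -
  define N where "N v = {w. w < n \<and> adj v w}" for v
  have N_sub: "N x \<union> N y \<subseteq> {..<n}" by (auto simp: N_def)
  have "card (N x) = k" "card (N y) = k"
    using srg x y by (simp_all add: strongly_regular_def degree_def N_def)
  moreover have "card (N x \<inter> N y) = e"
  proof -
    have "N x \<inter> N y = {w. w < n \<and> adj x w \<and> adj y w}" by (auto simp: N_def)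
    then show ?thesis using srg x y xy by (simp add: strongly_regular_def common_nbrs_def)
  qed
  ultimately have "card (N x \<union> N y) + e = 2 * k"
    using card_Un_Int[of "N x" "N y"] by (simp add: N_def)
  moreover have "card {w. w < n \<and> \<not> adj x w \<and> \<not> adj y w} = n - card (N x \<union> N y)"
  proof -
    have "{w. w < n \<and> \<not> adj x w \<and> \<not> adj y w} = {..<n} - (N x \<union> N y)"
      by (auto simp: N_def)
    also have "card \<dots> = n - card (N x \<union> N y)"
      using N_sub by (subst card_Diff_subset) (auto intro: finite_subset)
    finally show ?thesis .
  qed
  moreover have "card (N x \<union> N y) \<le> n"
    using card_mono[OF _ N_sub] by simp
  ultimately show ?thesis by linarith
qed

lemma srg_edge_dominating:
  assumes srg: "strongly_regular n adj k e d"
    and disconn: "\<not> connected_graph n (complement n adj)"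
    and x: "x < n" and y: "y < n" and xy: "adj x y" and w: "w < n"
  shows "adj x w \<or> adj y w"
proof -
  define Z where "Z u v = {w. w < n \<and> \<not> adj u w \<and> \<not> adj v w}" for u v
  let ?C = "\<lambda>u v. u < n \<and> v < n \<and> complement n adj u v"
  have sym: "adj u v \<longleftrightarrow> adj v u" if "u < n" "v < n" for u v
    using srg that by (simp add: strongly_regular_def simple_graph_def)
  from disconn obtain u v where uv: "u < n" "v < n" "\<not> ?C\<^sup>*\<^sup>* u v"
    unfolding connected_graph_def by blast
  then have "u \<noteq> v" by auto
  then have "adj u v" using uv by (auto simp: complement_def)
  have "Z u v = {}" \<comment> \<open>a common non-neighbour would join \<open>u\<close> and \<open>v\<close> in the complement\<close>
  proof (rule ccontr)
    assume "Z u v \<noteq> {}"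
    then obtain z where z: "z < n" "\<not> adj u z" "\<not> adj v z" by (auto simp: Z_def)
    then have "z \<noteq> u" "z \<noteq> v" using \<open>adj u v\<close> sym uv by auto
    then have uz: "?C u z" and zv: "?C z v" using z uv sym by (auto simp: complement_def)
    have "?C\<^sup>*\<^sup>* u v"
      using converse_rtranclp_into_rtranclp[of ?C, OF uz r_into_rtranclp[of ?C, OF zv]] .
    then show False using uv by blast
  qed
  moreover have card_Z: "card (Z x' y') + 2 * k = n + e" if "x' < n" "y' < n" "adj x' y'" for x' y'
    unfolding Z_def using srg that by (rule srg_non_nbrs_card)
  ultimately have "card (Z x y) = 0"
    using card_Z[OF uv(1,2) \<open>adj u v\<close>] card_Z[OF x y xy] by simp
  then have "Z x y = {}" by (simp add: Z_def)
  then show ?thesis using w by (auto simp: Z_def)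
qed

lemma imprimitive_srg_equipartition:
  assumes "is_srg n adj" and "connected_graph n adj" and "imprimitive_srg n adj"
  obtains s where "equipartition n s (\<lambda>i j. i = j \<or> \<not> adj i j)" and "2 \<le> s" and "s < n"
proof -
  obtain k e d where srg: "strongly_regular n adj k e d" using assms(1) by (auto simp: is_srg_def)
  have disconn: "\<not> connected_graph n (complement n adj)"
    using assms(2,3) by (simp add: imprimitive_srg_def primitive_srg_def)
  from srg have simple: "simple_graph n adj" and deg: "\<And>i. i < n \<Longrightarrow> degree n adj i = k"
    and non_edge: "\<exists>i<n. \<exists>j<n. i \<noteq> j \<and> \<not> adj i j" and edge: "\<exists>i<n. \<exists>j<n. adj i j"
    by (auto simp: strongly_regular_def)
  let ?R = "\<lambda>i j. i = j \<or> \<not> adj i j"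
  have class_eq: "{j. j < n \<and> ?R i j} = {..<n} - {j. j < n \<and> adj i j}" if "i < n" for i
    using simple that by (auto simp: simple_graph_def)
  have card_class: "card {j. j < n \<and> ?R i j} = n - k" if "i < n" for i
    using deg[OF that] unfolding class_eq[OF that] degree_def by (subst card_Diff_subset) auto
  have "equipartition n (n - k) ?R"
  proof
    show "?R i j \<Longrightarrow> ?R j i" if "i < n" "j < n" for i j
      using simple that by (auto simp: simple_graph_def)
    show "?R i l" if "i < n" "j < n" "l < n" "?R i j" "?R j l" for i j l
      using srg_edge_dominating[OF srg disconn, of i l j] simple that
      by (auto simp: simple_graph_def)
  qed (use card_class in auto)
  moreover have "2 \<le> n - k"
  proof -
    obtain i j where ij: "i < n" "j < n" "i \<noteq> j" "\<not> adj i j" using non_edge by blast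
    then have "card {i, j} \<le> card {j. j < n \<and> ?R i j}" by (intro card_mono) auto
    then show ?thesis using card_class[OF ij(1)] ij(3) by simp
  qed
  moreover have "n - k < n"
  proof -
    obtain i j where ij: "i < n" "j < n" "adj i j" using edge by blast
    then have "0 < degree n adj i" by (auto simp: degree_def card_gt_0_iff)
    then show ?thesis using deg[OF ij(1)] ij(1) by simp
  qed
  ultimately show ?thesis using that by blast
qed

theorem mainTheorem6:
  fixes n :: nat and adj :: "nat \<Rightarrow> nat \<Rightarrow> bool"
  assumes "is_srg n adj"
    and "connected_graph n adj"
    and "imprimitive_srg n adj"
  shows "(energy n adj = energy n (complement n adj) \<longleftrightarrow>
            (\<exists>m::nat. m > 1 \<and> graph_iso n adj (m * m) (complete_multipartite m m)))
         \<and> (\<forall>m::nat. m > 1 \<longrightarrow>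
              energy (m * m) (complete_multipartite m m) = 2 * (real m - 1) * real m
            \<and> (\<exists>q::nat. energy (m * m) (complete_multipartite m m) = 4 * real q))"
proof -
  obtain s where "equipartition n s (\<lambda>i j. i = j \<or> \<not> adj i j)" and s: "2 \<le> s" "s < n"
    using imprimitive_srg_equipartition[OF assms] .
  then interpret equipartition n s "\<lambda>i j. i = j \<or> \<not> adj i j" by simp
  have "simple_graph n adj"
    using assms(1) by (auto simp: is_srg_def strongly_regular_def)
  then have adj_iff: "adj i j \<longleftrightarrow> \<not> (i = j \<or> \<not> adj i j)" if "i < n" "j < n" for i j
    using that by (auto simp: simple_graph_def)
  have complement_iff: "complement n adj i j \<longleftrightarrow> i \<noteq> j \<and> (i = j \<or> \<not> adj i j)"
    if "i < n" "j < n" for i j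
    using that by (auto simp: complement_def)
  have "energy n adj = energy n (complement n adj) \<longleftrightarrow> n = s * s"
    using multipartite_cliques_energy_eq_iff[OF adj_iff complement_iff s] .
  also have "\<dots> \<longleftrightarrow> (\<exists>m::nat. m > 1 \<and> graph_iso n adj (m * m) (complete_multipartite m m))"
    using multipartite_square_iso_iff[OF adj_iff] s by simp
  finally show ?thesis
    using energy_complete_multipartite energy_complete_multipartite_square_mult_four by auto
qed

end
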